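(* Let $Y$ be a random variable whose moment generating function $E[e^{tY}]$ exists for $|t|<r_0$ for some $r_0>0$. Let $(Y_j)_{j\ge1}$ be mutually independent copies of $Y$, $S_0=0$, $S_k=Y_1+\cdots+Y_k$ for $k\ge1$. Let $r$ be a positive integer and let $$\phi_{n,r}^Y(x)=\sum_{k=0}^{n}{n+r\brace k+r}_{r,Y}x^k,\qquad {n+r\brace k+r}_{r,Y}=\frac{1}{k!}\sum_{j=0}^{k}\binom{k}{j}(-1)^{k-j}E\big[(S_j+r)^n\big].$$ Then for all integers $m,n\ge0$, $$\phi_{m+n,r}^Y(x)=\sum_{i=0}^{n}\sum_{k=0}^{m}\binom{n}{i}\phi_{i,r}^Y(x)x^k\frac{1}{k!}\sum_{j=k}^{m}\binom{m}{j}\sum_{l_1+\cdots+l_k=j}\binom{j}{l_1,\dots,l_k}r^{m-j}E\Big[S_k^{n-i}\prod_{p=1}^{k}Y_p^{l_p}\Big],$$ where the innermost sum runs over $k$-tuples $(l_1,\dots,l_k)$ of positive integers with sum $j$.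
   Context: $\phi_{n,r}^Y(x)$ are the probabilistic $r$-Bell polynomials associated with $Y$. For $k=0$ the sum over $(l_1,\dots,l_k)$ equals $1$ if $j=0$ and $0$ otherwise (empty product equal to $1$). $\binom{j}{l_1,\dots,l_k}$ is the multinomial coefficient. *)

theory Defs
  imports "HOL-Probability.Probability"
begin

definition partial_sum :: "(nat \<Rightarrow> 'a \<Rightarrow> real) \<Rightarrow> nat \<Rightarrow> 'a \<Rightarrow> real" where
  "partial_sum Ys k \<omega> = (\<Sum>p\<in>{1..k}. Ys p \<omega>)"

definition prob_r_stirling :: "'a measure \<Rightarrow> (nat \<Rightarrow> 'a \<Rightarrow> real) \<Rightarrow> nat \<Rightarrow> nat \<Rightarrow> nat \<Rightarrow> real" where
  "prob_r_stirling M Ys r n k =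
     (1 / fact k) * (\<Sum>j=0..k. real (k choose j) * (-1) ^ (k - j) *
        integral\<^sup>L M (\<lambda>\<omega>. (partial_sum Ys j \<omega> + real r) ^ n))"

definition prob_r_bell :: "'a measure \<Rightarrow> (nat \<Rightarrow> 'a \<Rightarrow> real) \<Rightarrow> nat \<Rightarrow> nat \<Rightarrow> real \<Rightarrow> real" where
  "prob_r_bell M Ys r n x = (\<Sum>k=0..n. prob_r_stirling M Ys r n k * x ^ k)"

definition compositions :: "nat \<Rightarrow> nat \<Rightarrow> (nat \<Rightarrow> nat) set" where
  "compositions k j = {l \<in> {1..k} \<rightarrow>\<^sub>E {1..j}. (\<Sum>p\<in>{1..k}. l p) = j}"

definition multinom :: "nat \<Rightarrow> nat \<Rightarrow> (nat \<Rightarrow> nat) \<Rightarrow> real" where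
  "multinom j k l = fact j / (\<Prod>p\<in>{1..k}. fact (l p))"

end

theory Submission
  imports Defs
begin

text \<open>
  Let M(t) = E[exp (t Y)], taken as the formal power series with coefficients E[Y^n] / n!.
  By independence, exp (r t) M(t)^j is the exponential generating function of E[(S_j + r)^N],
  so exp (r t) (M(t) - 1)^K / K! generates the r-Stirling numbers and
  B(t) = exp (r t) exp (x (M(t) - 1)) generates the r-Bell polynomials. Now phi_(m+n)(x) / (m! n!)
  is the coefficient of s^n t^m in B(s + t), and splitting M(s + t) - 1 = (M(s) - 1) + W(s, t)
  with W = M(s + t) - M(s) gives B(s + t) = exp (r t) B(s) exp (x W). The coefficient of t^j in
  W^k is a sum over compositions l_1 + ... + l_k = j of the products of the M^(l_p)(s) / l_p!,
  and by independence once more the product of the M^(l_p)(s) is E[Y_1^l_1 ... Y_k^l_k exp (s S_k)].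
  Only finitely many coefficients are involved, so the exponentials of power series can be
  replaced by truncations.
\<close>

section \<open>Formal Taylor expansion\<close>

lemma fps_nth_deriv_nth:
  "fps_nth (fps_nth_deriv k (f :: 'a::field_char_0 fps)) n = fact (n + k) / fact n * fps_nth f (n + k)"
proof (induction k arbitrary: f)
  case 0
  then show ?case by simp
next
  case (Suc k)
  then show ?case
    by (simp add: fps_nth_deriv_commute algebra_simps)
qed

lemma fps_nth_deriv_mult:
  "fps_nth_deriv n (f * g) =
     (\<Sum>i\<le>n. of_nat (n choose i) * fps_nth_deriv i f * fps_nth_deriv (n - i) (g :: 'a::comm_ring_1 fps))"
proof (induction n)
  case 0
  then show ?case by simp
next
  case (Suc n)
  have pascal: "Suc n choose i = (n choose i) + (if i = 0 then 0 else n choose (i - 1))" for i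
    by (cases i) simp_all
  have "fps_nth_deriv (Suc n) (f * g) =
    (\<Sum>i\<le>n. of_nat (n choose i) * (fps_nth_deriv (Suc i) f * fps_nth_deriv (n - i) g
                                  + fps_nth_deriv i f * fps_nth_deriv (Suc (n - i)) g))"
    by (simp only: fps_nth_deriv_commute Suc.IH fps_deriv_sum)
       (simp add: fps_nth_deriv_commute algebra_simps del: fps_nth_deriv.simps)
  also have "\<dots> = (\<Sum>i\<le>Suc n. of_nat (Suc n choose i) * fps_nth_deriv i f * fps_nth_deriv (Suc n - i) g)"
    apply (simp add: pascal algebra_simps sum.distrib atLeast0AtMost[symmetric] del: fps_nth_deriv.simps)
    apply (subst (4) sum_Suc_reindex)
    apply (auto simp: algebra_simps Suc_diff_le binomial_eq_0 intro: sum.cong simp del: fps_nth_deriv.simps)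
    done
  finally show ?case .
qed

text \<open>f(s + t) as a power series in t whose coefficients are power series in s.\<close>

definition fps_taylor :: "'a::field_char_0 fps \<Rightarrow> 'a fps fps" where
  "fps_taylor f = Abs_fps (\<lambda>k. fps_const (1 / fact k) * fps_nth_deriv k f)"

lemma fps_nth_fps_taylor [simp]:
  "fps_nth (fps_taylor f) k = fps_const (1 / fact k) * fps_nth_deriv k f"
  by (simp add: fps_taylor_def)

lemma fps_nth_nth_fps_taylor:
  "fps_nth (fps_nth (fps_taylor f) k) n = of_nat ((n + k) choose k) * fps_nth f (n + k)"
  by (simp add: fps_nth_deriv_nth binomial_fact)

lemma fps_taylor_mult: "fps_taylor (f * g) = fps_taylor f * fps_taylor g"
proof (rule fps_ext)
  fix k
  have "fps_nth (fps_taylor (f * g)) k =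
      (\<Sum>i\<le>k. fps_const (1 / fact k) * (of_nat (k choose i) * fps_nth_deriv i f * fps_nth_deriv (k - i) g))"
    by (simp add: fps_nth_deriv_mult sum_distrib_left)
  also have "\<dots> = (\<Sum>i\<le>k. fps_nth (fps_taylor f) i * fps_nth (fps_taylor g) (k - i))"
  proof (intro sum.cong refl)
    fix i assume "i \<in> {..k}"
    then have "of_nat (k choose i) / fact k = (1 / fact i) * (1 / fact (k - i) :: 'a)"
      by (simp add: binomial_fact)
    then show "fps_const (1 / fact k) * (of_nat (k choose i) * fps_nth_deriv i f * fps_nth_deriv (k - i) g) =
        fps_nth (fps_taylor f) i * fps_nth (fps_taylor g) (k - i)"
      by (simp add: mult_ac flip: fps_of_nat fps_const_mult)
  qed
  also have "\<dots> = fps_nth (fps_taylor f * fps_taylor g) k"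
    by (simp add: fps_mult_nth atLeast0AtMost)
  finally show "fps_nth (fps_taylor (f * g)) k = fps_nth (fps_taylor f * fps_taylor g) k" .
qed

lemma fps_taylor_const [simp]: "fps_taylor (fps_const c) = fps_const (fps_const c)"
  by (rule fps_ext) simp

lemma fps_taylor_one [simp]: "fps_taylor 1 = 1"
  using fps_taylor_const[of 1] by simp

lemma fps_taylor_diff: "fps_taylor (f - g) = fps_taylor f - fps_taylor g"
  by (rule fps_ext) (simp add: algebra_simps)

lemma fps_taylor_sum: "fps_taylor (\<Sum>i\<in>A. f i) = (\<Sum>i\<in>A. fps_taylor (f i))"
  by (rule fps_ext) (simp add: fps_nth_deriv_sum fps_sum_nth sum_distrib_left)

lemma fps_taylor_power: "fps_taylor (f ^ n) = fps_taylor f ^ n"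
  by (induction n) (simp_all add: fps_taylor_mult)

lemma fps_nth_fps_taylor_exp:
  "fps_nth (fps_taylor (fps_exp c)) k = fps_const (c ^ k / fact k) * fps_exp c"
  by (simp add: mult.assoc[symmetric])

lemma fps_nth_taylor_exp_mult:
  "fps_nth (fps_taylor (fps_exp c) * G) m =
     (\<Sum>j\<le>m. fps_const (c ^ (m - j) / fact (m - j)) * (fps_exp c * fps_nth G j))"
  by (subst mult.commute) (simp add: fps_mult_nth fps_nth_fps_taylor_exp atLeast0AtMost mult_ac)

section \<open>Powers of power series without constant term\<close>

lemma prod_fps_const: "(\<Prod>i\<in>A. fps_const (f i)) = fps_const (\<Prod>i\<in>A. f i)"
  by (induction A rule: infinite_finite_induct) auto

lemma finite_compositions: "finite (compositions k j)"
  unfolding compositions_def by (rule finite_subset[of _ "{1..k} \<rightarrow>\<^sub>E {1..j}"]) (auto intro: finite_PiE)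

lemma compositions_empty: "j < k \<Longrightarrow> compositions k j = {}"
proof (rule ccontr)
  assume "j < k" "compositions k j \<noteq> {}"
  then obtain l where l: "l \<in> {1..k} \<rightarrow>\<^sub>E {1..j}" "(\<Sum>p\<in>{1..k}. l p) = j"
    by (auto simp: compositions_def)
  have "(\<Sum>p\<in>{1..k}. (1::nat)) \<le> (\<Sum>p\<in>{1..k}. l p)"
    using l(1) by (intro sum_mono) auto
  then show False using l(2) \<open>j < k\<close> by simp
qed

lemma sum_compositions_Suc:
  "(\<Sum>(i, l)\<in>Sigma {..<j} (compositions k). h (l(Suc k := j - i))) = (\<Sum>l\<in>compositions (Suc k) j. h l)"
proof (rule sum.reindex_bij_witness[where j = "\<lambda>(i, l). l(Suc k := j - i)"
      and i = "\<lambda>l. (j - l (Suc k), l(Suc k := undefined))"], goal_cases)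
  case (1 a)
  then show ?case
    by (auto simp: compositions_def PiE_def extensional_def fun_eq_iff)
next
  case (2 a)
  obtain i l where a: "a = (i, l)" by (cases a)
  from 2 have i: "i < j" and l: "l \<in> {1..k} \<rightarrow>\<^sub>E {1..i}" "(\<Sum>p\<in>{1..k}. l p) = i"
    by (auto simp: a compositions_def)
  have "(\<Sum>p\<in>{1..k}. (l(Suc k := j - i)) p) = i"
    using l(2) by (intro trans[OF sum.cong l(2)]) auto
  then show ?case
    using i l by (auto simp: a compositions_def PiE_def extensional_def Pi_def atLeastAtMostSuc_conv)
next
  case (3 l)
  then have "(\<Sum>p\<in>{1..k}. l p) + l (Suc k) = j"
    by (auto simp: compositions_def)
  then show ?case by (auto simp: fun_eq_iff)
next
  case (4 l)
  then have l: "l \<in> {1..Suc k} \<rightarrow>\<^sub>E {1..j}" and sum_l: "(\<Sum>p\<in>{1..k}. l p) + l (Suc k) = j"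
    by (auto simp: compositions_def)
  have "(\<Sum>p\<in>{1..k}. (l(Suc k := undefined)) p) = (\<Sum>p\<in>{1..k}. l p)"
    by (intro sum.cong) auto
  moreover have "l p \<le> (\<Sum>p\<in>{1..k}. l p)" if "p \<in> {1..k}" for p
    using that by (intro member_le_sum) auto
  ultimately show ?case
    using l sum_l by (auto simp: compositions_def PiE_def extensional_def Pi_def)
qed auto

lemma fps_nth_power_compositions:
  fixes F :: "'a::comm_ring_1 fps"
  assumes F0: "fps_nth F 0 = 0"
  shows "fps_nth (F ^ k) j = (\<Sum>l\<in>compositions k j. \<Prod>p\<in>{1..k}. fps_nth F (l p))"
proof (induction k arbitrary: j)
  case 0
  have "compositions 0 j = (if j = 0 then {\<lambda>_. undefined} else {})"
    by (auto simp: compositions_def)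
  then show ?case by simp
next
  case (Suc k)
  have "fps_nth (F ^ Suc k) j = (\<Sum>i\<le>j. fps_nth (F ^ k) i * fps_nth F (j - i))"
    by (simp only: power_Suc2 fps_mult_nth atLeast0AtMost)
  also have "\<dots> = (\<Sum>i<j. fps_nth (F ^ k) i * fps_nth F (j - i))"
    by (simp add: F0 flip: lessThan_Suc_atMost)
  also have "\<dots> = (\<Sum>(i, l)\<in>Sigma {..<j} (compositions k). (\<Prod>p\<in>{1..k}. fps_nth F (l p)) * fps_nth F (j - i))"
    by (simp add: Suc.IH sum_distrib_right sum.Sigma finite_compositions)
  also have "\<dots> = (\<Sum>(i, l)\<in>Sigma {..<j} (compositions k). \<Prod>p\<in>{1..Suc k}. fps_nth F ((l(Suc k := j - i)) p))"
    by (auto intro!: sum.cong prod.cong)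
  also have "\<dots> = (\<Sum>l\<in>compositions (Suc k) j. \<Prod>p\<in>{1..Suc k}. fps_nth F (l p))"
    by (rule sum_compositions_Suc)
  finally show ?case .
qed

lemma fps_nth_mult_power_eq_0:
  fixes F G :: "'a::comm_semiring_1 fps"
  assumes "fps_nth F 0 = 0" and "j < k"
  shows "fps_nth (G * F ^ k) j = 0"
  using startsby_zero_power_prefix[OF assms(1)] assms(2) by (auto simp: fps_mult_nth intro!: sum.neutral)

lemma sum_triangle_eq_sum_rectangle:
  fixes g :: "nat \<Rightarrow> nat \<Rightarrow> 'a::comm_monoid_add"
  assumes "\<And>k k'. g k k' \<noteq> 0 \<Longrightarrow> k \<le> m \<and> k' \<le> n"
  shows "(\<Sum>K\<le>m + n. \<Sum>k\<le>K. g k (K - k)) = (\<Sum>k\<le>m. \<Sum>k'\<le>n. g k k')"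
proof -
  have "(\<Sum>K\<le>m + n. \<Sum>k\<le>K. g k (K - k)) = (\<Sum>(k, k')\<in>{(i, j). i + j \<le> m + n}. g k k')"
    by (rule sum.triangle_reindex_eq[symmetric])
  also have "\<dots> = (\<Sum>(k, k')\<in>{..m} \<times> {..n}. g k k')"
  proof (rule sum.mono_neutral_right)
    show "finite {(i, j). i + j \<le> m + n}"
      by (rule finite_subset[of _ "{..m + n} \<times> {..m + n}"]) auto
  qed (use assms in auto)
  finally show ?thesis
    by (simp add: sum.cartesian_product)
qed

lemma fps_nth_nth_mult_power_const_add:
  fixes E W :: "'a::comm_ring_1 fps fps" and A :: "'a fps"
  shows "fps_nth (fps_nth (E * (fps_const A + W) ^ K) m) n =
    (\<Sum>k\<le>K. of_nat (K choose k) * fps_nth (fps_nth (E * W ^ k) m * A ^ (K - k)) n)"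
proof -
  have binomial: "(fps_const A + W) ^ K =
      (\<Sum>k\<le>K. fps_const (fps_const (of_nat (K choose k))) * (W ^ k * fps_const (A ^ (K - k))))"
    unfolding add.commute[of "fps_const A"] binomial_ring by (simp add: mult_ac flip: fps_of_nat)
  have reorder: "E * (fps_const (fps_const c) * (W ^ k * fps_const P)) =
      fps_const (fps_const c) * (E * W ^ k * fps_const P)" for c P k
    by (simp add: mult_ac)
  show ?thesis
    unfolding binomial sum_distrib_left fps_sum_nth reorder fps_mult_left_const_nth fps_mult_right_const_nth
    by simp
qed

text \<open>
  Coefficientwise form of exp (x (A + W)) = exp (x A) exp (x W); the truncations are harmless
  because W and A have no constant term.
\<close>

lemma fps_nth_nth_mult_truncated_exp_add:
  fixes E W :: "'a::field_char_0 fps fps" and A :: "'a fps"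
  assumes W0: "fps_nth W 0 = 0" and A0: "fps_nth A 0 = 0"
  shows "fps_nth (fps_nth (E * (\<Sum>K\<le>m + n. fps_const (fps_const (x ^ K / fact K)) * (fps_const A + W) ^ K)) m) n =
    (\<Sum>k\<le>m. x ^ k / fact k * fps_nth (fps_nth (E * W ^ k) m * (\<Sum>K\<le>n. fps_const (x ^ K / fact K) * A ^ K)) n)"
proof -
  define T where "T k k' = fps_nth (fps_nth (E * W ^ k) m * A ^ k') n" for k k'
  define g where "g k k' = x ^ k / fact k * (x ^ k' / fact k') * T k k'" for k k'
  have T0: "k \<le> m \<and> k' \<le> n" if "T k k' \<noteq> 0" for k k'
  proof (rule ccontr)
    assume "\<not> (k \<le> m \<and> k' \<le> n)"
    then have "m < k \<or> n < k'" by auto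
    then show False
      using that fps_nth_mult_power_eq_0[OF W0, of m k E] fps_nth_mult_power_eq_0[OF A0, of n k']
      by (auto simp: T_def)
  qed
  have "fps_nth (fps_nth (E * (\<Sum>K\<le>m + n. fps_const (fps_const (x ^ K / fact K)) * (fps_const A + W) ^ K)) m) n =
      (\<Sum>K\<le>m + n. x ^ K / fact K * fps_nth (fps_nth (E * (fps_const A + W) ^ K) m) n)"
    by (simp add: fps_sum_nth sum_distrib_left mult.left_commute[of E])
  also have "\<dots> = (\<Sum>K\<le>m + n. \<Sum>k\<le>K. g k (K - k))"
  proof (rule sum.cong[OF refl])
    fix K
    have "fps_nth (fps_nth (E * (fps_const A + W) ^ K) m) n = (\<Sum>k\<le>K. of_nat (K choose k) * T k (K - k))"
      by (simp add: fps_nth_nth_mult_power_const_add T_def)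
    moreover have "x ^ K / fact K * of_nat (K choose k) = x ^ k / fact k * (x ^ (K - k) / fact (K - k))" if "k \<le> K" for k
      using that by (simp add: binomial_fact flip: power_add)
    ultimately show "x ^ K / fact K * fps_nth (fps_nth (E * (fps_const A + W) ^ K) m) n = (\<Sum>k\<le>K. g k (K - k))"
      by (simp add: g_def sum_distrib_left mult.assoc[symmetric])
  qed
  also have "\<dots> = (\<Sum>k\<le>m. \<Sum>k'\<le>n. g k k')"
    using T0 by (intro sum_triangle_eq_sum_rectangle) (auto simp: g_def)
  also have "\<dots> = (\<Sum>k\<le>m. x ^ k / fact k * fps_nth (fps_nth (E * W ^ k) m * (\<Sum>K\<le>n. fps_const (x ^ K / fact K) * A ^ K)) n)"
  proof -
    have pull_const: "P * (fps_const c * Q) = fps_const c * (P * Q)" for P Q :: "'a fps" and c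
      by (simp add: mult.left_commute)
    show ?thesis
      unfolding g_def T_def sum_distrib_left fps_sum_nth pull_const fps_mult_left_const_nth
      by (simp add: mult_ac)
  qed
  finally show ?thesis .
qed

section \<open>Moments of partial sums of independent copies\<close>

lemma power_div_fact_le_exp:
  fixes x :: real
  assumes "x \<ge> 0"
  shows "x ^ n / fact n \<le> exp x"
proof -
  have exp_sums: "(\<lambda>i. x ^ i / fact i) sums exp x"
    using exp_converges[of x] by (simp add: divide_inverse mult.commute)
  have "x ^ n / fact n = (\<Sum>i\<in>{n}. x ^ i / fact i)" by simp
  also have "\<dots> \<le> (\<Sum>i. x ^ i / fact i)"
    using exp_sums assms by (intro sum_le_suminf) (auto simp: sums_iff)
  also have "\<dots> = exp x"
    using exp_sums by (simp add: sums_iff)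
  finally show ?thesis .
qed

lemma integrable_power_if_integrable_exp:
  fixes X :: "'a \<Rightarrow> real"
  assumes X: "X \<in> borel_measurable M" and "t > 0"
    and pos: "integrable M (\<lambda>\<omega>. exp (t * X \<omega>))" and neg: "integrable M (\<lambda>\<omega>. exp (- t * X \<omega>))"
  shows "integrable M (\<lambda>\<omega>. X \<omega> ^ n)"
proof (rule Bochner_Integration.integrable_bound)
  show "integrable M (\<lambda>\<omega>. fact n / t ^ n * (exp (t * X \<omega>) + exp (- t * X \<omega>)))"
    using pos neg by auto
  show "(\<lambda>\<omega>. X \<omega> ^ n) \<in> borel_measurable M"
    using X by measurable
  show "AE \<omega> in M. norm (X \<omega> ^ n) \<le> norm (fact n / t ^ n * (exp (t * X \<omega>) + exp (- t * X \<omega>)))"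
  proof (rule AE_I2)
    fix \<omega>
    have "(t * \<bar>X \<omega>\<bar>) ^ n / fact n \<le> exp (t * \<bar>X \<omega>\<bar>)"
      using \<open>t > 0\<close> by (intro power_div_fact_le_exp) auto
    also have "\<dots> \<le> exp (t * X \<omega>) + exp (- t * X \<omega>)"
      by (cases "X \<omega> \<ge> 0") auto
    finally show "norm (X \<omega> ^ n) \<le> norm (fact n / t ^ n * (exp (t * X \<omega>) + exp (- t * X \<omega>)))"
      using \<open>t > 0\<close> by (simp add: power_abs field_simps)
  qed
qed

locale iid_copies = prob_space M
  for M :: "'a measure" and Y :: "'a \<Rightarrow> real" and Ys :: "nat \<Rightarrow> 'a \<Rightarrow> real" +
  assumes measurable_Y: "Y \<in> borel_measurable M"
    and integrable_Y_power: "\<And>n. integrable M (\<lambda>\<omega>. Y \<omega> ^ n)"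
    and indep_Ys: "indep_vars (\<lambda>_. borel) Ys {1..}"
    and distr_Ys: "\<And>p. p \<ge> 1 \<Longrightarrow> distr M borel (Ys p) = distr M borel Y"
begin

definition moment_egf :: "real fps" where
  "moment_egf = Abs_fps (\<lambda>n. expectation (\<lambda>\<omega>. Y \<omega> ^ n) / fact n)"

lemma fps_nth_deriv_moment_egf:
  "fps_nth (fps_nth_deriv q moment_egf) n = expectation (\<lambda>\<omega>. Y \<omega> ^ (n + q)) / fact n"
  by (simp add: fps_nth_deriv_nth moment_egf_def)

lemma measurable_Ys: "p \<ge> 1 \<Longrightarrow> Ys p \<in> borel_measurable M"
  using indep_Ys unfolding indep_vars_def by auto

lemma
  assumes "p \<ge> 1"
  shows integrable_Ys_power: "integrable M (\<lambda>\<omega>. Ys p \<omega> ^ n)"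
    and integral_Ys_power: "expectation (\<lambda>\<omega>. Ys p \<omega> ^ n) = expectation (\<lambda>\<omega>. Y \<omega> ^ n)"
proof -
  have power: "(\<lambda>y::real. y ^ n) \<in> borel_measurable borel" by measurable
  show "integrable M (\<lambda>\<omega>. Ys p \<omega> ^ n)"
    using integrable_distr_eq[OF measurable_Ys[OF assms] power] integrable_distr_eq[OF measurable_Y power]
      integrable_Y_power distr_Ys[OF assms] by simp
  show "expectation (\<lambda>\<omega>. Ys p \<omega> ^ n) = expectation (\<lambda>\<omega>. Y \<omega> ^ n)"
    using integral_distr[OF measurable_Ys[OF assms] power] integral_distr[OF measurable_Y power]
      distr_Ys[OF assms] by simp
qed

definition weighted_power :: "nat \<Rightarrow> real \<Rightarrow> (nat \<Rightarrow> nat) \<Rightarrow> nat \<Rightarrow> 'a \<Rightarrow> real" where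
  "weighted_power k c l N \<omega> = (partial_sum Ys k \<omega> + c) ^ N * (\<Prod>p\<in>{1..k}. Ys p \<omega> ^ l p)"

lemma weighted_power_Suc:
  "weighted_power (Suc k) c l N \<omega> =
     (\<Sum>i\<le>N. real (N choose i) * (weighted_power k c l i \<omega> * Ys (Suc k) \<omega> ^ (N - i + l (Suc k))))"
proof -
  have "weighted_power (Suc k) c l N \<omega> = ((partial_sum Ys k \<omega> + c) + Ys (Suc k) \<omega>) ^ N *
          ((\<Prod>p\<in>{1..k}. Ys p \<omega> ^ l p) * Ys (Suc k) \<omega> ^ l (Suc k))"
    by (simp add: weighted_power_def partial_sum_def algebra_simps)
  also have "\<dots> = (\<Sum>i\<le>N. real (N choose i) * (weighted_power k c l i \<omega> * Ys (Suc k) \<omega> ^ (N - i + l (Suc k))))"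
    unfolding binomial_ring[of "partial_sum Ys k \<omega> + c"] sum_distrib_right
  proof (intro sum.cong refl)
    fix i
    show "real (N choose i) * (partial_sum Ys k \<omega> + c) ^ i * Ys (Suc k) \<omega> ^ (N - i) *
        ((\<Prod>p\<in>{1..k}. Ys p \<omega> ^ l p) * Ys (Suc k) \<omega> ^ l (Suc k)) =
      real (N choose i) * (weighted_power k c l i \<omega> * Ys (Suc k) \<omega> ^ (N - i + l (Suc k)))"
      using power_add[of "Ys (Suc k) \<omega>" "N - i" "l (Suc k)"] by (simp add: weighted_power_def mult_ac)
  qed
  finally show ?thesis .
qed

lemma indep_weighted_power_Ys:
  "indep_var borel (weighted_power k c l i) borel (\<lambda>\<omega>. Ys (Suc k) \<omega> ^ q)"
proof -
  have "indep_var (PiM {1..k} (\<lambda>_. borel)) (\<lambda>\<omega>. restrict (\<lambda>p. Ys p \<omega>) {1..k})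
                  (PiM {Suc k} (\<lambda>_. borel)) (\<lambda>\<omega>. restrict (\<lambda>p. Ys p \<omega>) {Suc k})"
    by (rule indep_var_restrict[OF indep_Ys]) auto
  moreover have "(\<lambda>w. ((\<Sum>p\<in>{1..k}. w p) + c) ^ i * (\<Prod>p\<in>{1..k}. w p ^ l p))
      \<in> borel_measurable (PiM {1..k} (\<lambda>_. borel))"
    by measurable
  moreover have "(\<lambda>w. w (Suc k) ^ q) \<in> borel_measurable (PiM {Suc k} (\<lambda>_. borel :: real measure))"
    by measurable
  ultimately have "indep_var
      borel ((\<lambda>w. ((\<Sum>p\<in>{1..k}. w p) + c) ^ i * (\<Prod>p\<in>{1..k}. w p ^ l p)) \<circ> (\<lambda>\<omega>. restrict (\<lambda>p. Ys p \<omega>) {1..k}))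
      borel ((\<lambda>w. w (Suc k) ^ q) \<circ> (\<lambda>\<omega>. restrict (\<lambda>p. Ys p \<omega>) {Suc k}))"
    by (rule indep_var_compose)
  then show ?thesis
    by (simp add: comp_def weighted_power_def[abs_def] partial_sum_def)
qed

lemma integrable_weighted_power: "integrable M (weighted_power k c l N)"
proof (induction k arbitrary: N)
  case 0
  then show ?case by (simp add: weighted_power_def partial_sum_def)
next
  case (Suc k)
  have "integrable M (\<lambda>\<omega>. weighted_power k c l i \<omega> * Ys (Suc k) \<omega> ^ q)" for i q
    by (rule indep_var_integrable[OF indep_weighted_power_Ys Suc.IH integrable_Ys_power]) simp
  then show ?case
    by (subst weighted_power_Suc[abs_def]) auto
qed

lemma integral_weighted_power_Suc:
  "expectation (weighted_power (Suc k) c l N) =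
     (\<Sum>i\<le>N. real (N choose i) *
        (expectation (weighted_power k c l i) * expectation (\<lambda>\<omega>. Y \<omega> ^ (N - i + l (Suc k)))))"
proof -
  have "integrable M (\<lambda>\<omega>. weighted_power k c l i \<omega> * Ys (Suc k) \<omega> ^ q)" for i q
    by (rule indep_var_integrable[OF indep_weighted_power_Ys integrable_weighted_power integrable_Ys_power]) simp
  moreover have "expectation (\<lambda>\<omega>. weighted_power k c l i \<omega> * Ys (Suc k) \<omega> ^ q) =
      expectation (weighted_power k c l i) * expectation (\<lambda>\<omega>. Y \<omega> ^ q)" for i q
    using indep_var_lebesgue_integral[OF indep_weighted_power_Ys[of k c l i q] integrable_weighted_power
        integrable_Ys_power[of "Suc k" q]] integral_Ys_power[of "Suc k" q]
    by simp
  ultimately show ?thesis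
    by (subst weighted_power_Suc[abs_def]) (simp add: integral_sum)
qed

lemma fps_nth_exp_mult_prod_deriv_moment_egf:
  "fps_nth (fps_exp c * (\<Prod>p\<in>{1..k}. fps_nth_deriv (l p) moment_egf)) N =
     expectation (weighted_power k c l N) / fact N"
proof (induction k arbitrary: N)
  case 0
  then show ?case by (simp add: weighted_power_def partial_sum_def prob_space)
next
  case (Suc k)
  have "fps_nth (fps_exp c * (\<Prod>p\<in>{1..Suc k}. fps_nth_deriv (l p) moment_egf)) N =
      fps_nth ((fps_exp c * (\<Prod>p\<in>{1..k}. fps_nth_deriv (l p) moment_egf)) * fps_nth_deriv (l (Suc k)) moment_egf) N"
    by (simp add: mult.assoc)
  also have "\<dots> = (\<Sum>i\<le>N. expectation (weighted_power k c l i) / fact i *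
                      (expectation (\<lambda>\<omega>. Y \<omega> ^ (N - i + l (Suc k))) / fact (N - i)))"
    unfolding fps_mult_nth[of "fps_exp c * (\<Prod>p\<in>{1..k}. fps_nth_deriv (l p) moment_egf)"] Suc.IH
    by (simp add: fps_nth_deriv_moment_egf atLeast0AtMost)
  also have "\<dots> = (\<Sum>i\<le>N. real (N choose i) * (expectation (weighted_power k c l i) *
                      expectation (\<lambda>\<omega>. Y \<omega> ^ (N - i + l (Suc k))))) / fact N"
    unfolding sum_divide_distrib by (intro sum.cong refl) (simp add: binomial_fact field_simps)
  also have "\<dots> = expectation (weighted_power (Suc k) c l N) / fact N"
    by (simp add: integral_weighted_power_Suc)
  finally show ?case .
qed

section \<open>Generating functions of the r-Stirling numbers and r-Bell polynomials\<close>

lemma fps_nth_moment_egf_0: "fps_nth moment_egf 0 = 1"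
  by (simp add: moment_egf_def prob_space)

lemma fps_nth_exp_mult_moment_egf_power:
  "fps_nth (fps_exp c * moment_egf ^ j) N = expectation (\<lambda>\<omega>. (partial_sum Ys j \<omega> + c) ^ N) / fact N"
  using fps_nth_exp_mult_prod_deriv_moment_egf[of c "\<lambda>_. 0" j N]
  by (simp add: weighted_power_def[abs_def])

lemma fps_nth_stirling_egf:
  "fps_nth (fps_exp (real r) * (moment_egf - 1) ^ K) N = fact K * prob_r_stirling M Ys r N K / fact N"
proof -
  have "(moment_egf - 1) ^ K = (\<Sum>j\<le>K. fps_const (real (K choose j) * (-1) ^ (K - j)) * moment_egf ^ j)"
  proof -
    have neg_one_power: "(-1 :: real fps) ^ n = fps_const ((-1) ^ n)" for n
      by (simp flip: fps_const_neg fps_const_power)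
    show ?thesis
      unfolding diff_conv_add_uminus binomial_ring neg_one_power
      by (simp add: mult_ac flip: fps_of_nat fps_const_mult)
  qed
  then have "fps_nth (fps_exp (real r) * (moment_egf - 1) ^ K) N =
      (\<Sum>j\<le>K. real (K choose j) * (-1) ^ (K - j) * fps_nth (fps_exp (real r) * moment_egf ^ j) N)"
    by (simp add: sum_distrib_left fps_sum_nth mult.left_commute[of "fps_exp _"])
  then show ?thesis
    by (simp add: fps_nth_exp_mult_moment_egf_power prob_r_stirling_def atLeast0AtMost sum_divide_distrib sum_distrib_left)
qed

lemma prob_r_stirling_eq_0: "N < K \<Longrightarrow> prob_r_stirling M Ys r N K = 0"
  using fps_nth_stirling_egf[of r K N] startsby_zero_power_prefix[of "moment_egf - 1" K]
  by (simp add: fps_mult_nth fps_nth_moment_egf_0)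

text \<open>exp (x (M(t) - 1)) truncated after the term (M(t) - 1)^n, which is exact up to t^n.\<close>

definition exp_mgf_trunc :: "real \<Rightarrow> nat \<Rightarrow> real fps" where
  "exp_mgf_trunc x n = (\<Sum>K\<le>n. fps_const (x ^ K / fact K) * (moment_egf - 1) ^ K)"

lemma fps_nth_bell_egf:
  assumes "N \<le> n"
  shows "fps_nth (fps_exp (real r) * exp_mgf_trunc x n) N = prob_r_bell M Ys r N x / fact N"
proof -
  have "fps_nth (fps_exp (real r) * exp_mgf_trunc x n) N =
      (\<Sum>K\<le>n. x ^ K / fact K * fps_nth (fps_exp (real r) * (moment_egf - 1) ^ K) N)"
    by (simp add: exp_mgf_trunc_def sum_distrib_left fps_sum_nth mult.left_commute[of "fps_exp _"])
  also have "\<dots> = (\<Sum>K\<le>n. prob_r_stirling M Ys r N K * x ^ K) / fact N"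
    by (simp add: fps_nth_stirling_egf sum_divide_distrib mult.commute)
  also have "\<dots> = (\<Sum>K=0..N. prob_r_stirling M Ys r N K * x ^ K) / fact N"
    using assms by (intro arg_cong[where f = "\<lambda>s. s / fact N"] sum.mono_neutral_right)
      (auto simp: prob_r_stirling_eq_0)
  finally show ?thesis
    by (simp add: prob_r_bell_def)
qed

definition moment_egf_increment :: "real fps fps" where
  "moment_egf_increment = fps_taylor moment_egf - fps_const moment_egf"

lemma fps_nth_moment_egf_increment:
  "fps_nth moment_egf_increment q = (if q = 0 then 0 else fps_const (1 / fact q) * fps_nth_deriv q moment_egf)"
  by (simp add: moment_egf_increment_def)

lemma fps_nth_nth_moment_egf_increment_power:
  "fps_nth (fps_nth (moment_egf_increment ^ k) j) b =
     (\<Sum>l\<in>compositions k j. (\<Prod>p\<in>{1..k}. 1 / fact (l p)) * expectation (weighted_power k 0 l b) / fact b)"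
proof -
  have "fps_nth (moment_egf_increment ^ k) j =
      (\<Sum>l\<in>compositions k j. \<Prod>p\<in>{1..k}. fps_nth moment_egf_increment (l p))"
    by (rule fps_nth_power_compositions) (simp add: fps_nth_moment_egf_increment)
  also have "\<dots> = (\<Sum>l\<in>compositions k j.
      fps_const (\<Prod>p\<in>{1..k}. 1 / fact (l p)) * (\<Prod>p\<in>{1..k}. fps_nth_deriv (l p) moment_egf))"
  proof (rule sum.cong[OF refl])
    fix l assume "l \<in> compositions k j"
    then have "(\<Prod>p\<in>{1..k}. fps_nth moment_egf_increment (l p)) =
        (\<Prod>p\<in>{1..k}. fps_const (1 / fact (l p)) * fps_nth_deriv (l p) moment_egf)"
      by (intro prod.cong refl) (auto simp: fps_nth_moment_egf_increment compositions_def PiE_def Pi_def)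
    then show "(\<Prod>p\<in>{1..k}. fps_nth moment_egf_increment (l p)) =
        fps_const (\<Prod>p\<in>{1..k}. 1 / fact (l p)) * (\<Prod>p\<in>{1..k}. fps_nth_deriv (l p) moment_egf)"
      by (simp add: prod.distrib prod_fps_const)
  qed
  finally have power_eq: "fps_nth (moment_egf_increment ^ k) j = (\<Sum>l\<in>compositions k j.
      fps_const (\<Prod>p\<in>{1..k}. 1 / fact (l p)) * (\<Prod>p\<in>{1..k}. fps_nth_deriv (l p) moment_egf))" .
  have prod_nth: "fps_nth (\<Prod>p\<in>{1..k}. fps_nth_deriv (l p) moment_egf) b =
      expectation (weighted_power k 0 l b) / fact b" for l
    using fps_nth_exp_mult_prod_deriv_moment_egf[of 0 l k b] by simp
  show ?thesis
    unfolding power_eq fps_sum_nth fps_mult_left_const_nth prod_nth by (simp only: times_divide_eq_right)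
qed

lemma prob_r_bell_add_eq_taylor_coeff:
  "prob_r_bell M Ys r (m + n) x =
     fact m * fact n * fps_nth (fps_nth (fps_taylor (fps_exp (real r) * exp_mgf_trunc x (m + n))) m) n"
  unfolding fps_nth_nth_fps_taylor using fps_nth_bell_egf[of "n + m" "m + n" r x]
  by (simp add: binomial_fact add.commute)

lemma fps_taylor_exp_mgf_trunc:
  "fps_taylor (exp_mgf_trunc x N) =
     (\<Sum>K\<le>N. fps_const (fps_const (x ^ K / fact K)) * (fps_const (moment_egf - 1) + moment_egf_increment) ^ K)"
proof -
  have "fps_taylor moment_egf - 1 = fps_const (moment_egf - 1) + moment_egf_increment"
    by (simp add: moment_egf_increment_def flip: fps_const_sub)
  then show ?thesis
    by (simp add: exp_mgf_trunc_def fps_taylor_sum fps_taylor_mult fps_taylor_power fps_taylor_diff)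
qed

lemma prob_r_bell_add_eq_increment_sum:
  "prob_r_bell M Ys r (m + n) x = fact m * fact n *
     (\<Sum>k\<le>m. x ^ k / fact k *
        fps_nth (fps_nth (fps_taylor (fps_exp (real r)) * moment_egf_increment ^ k) m * exp_mgf_trunc x n) n)"
proof -
  have vanish: "fps_nth moment_egf_increment 0 = 0" "fps_nth (moment_egf - 1) 0 = 0"
    by (simp_all add: fps_nth_moment_egf_increment fps_nth_moment_egf_0)
  have "prob_r_bell M Ys r (m + n) x = fact m * fact n *
      fps_nth (fps_nth (fps_taylor (fps_exp (real r)) * fps_taylor (exp_mgf_trunc x (m + n))) m) n"
    by (simp add: prob_r_bell_add_eq_taylor_coeff fps_taylor_mult)
  also have "\<dots> = fact m * fact n *
     (\<Sum>k\<le>m. x ^ k / fact k *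
        fps_nth (fps_nth (fps_taylor (fps_exp (real r)) * moment_egf_increment ^ k) m * exp_mgf_trunc x n) n)"
    unfolding fps_taylor_exp_mgf_trunc fps_nth_nth_mult_truncated_exp_add[OF vanish]
    by (simp only: exp_mgf_trunc_def)
  finally show ?thesis .
qed

lemma fps_nth_increment_taylor_exp_mgf_trunc:
  "fps_nth (fps_nth (fps_taylor (fps_exp (real r)) * moment_egf_increment ^ k) m * exp_mgf_trunc x n) n =
     (\<Sum>j\<le>m. real r ^ (m - j) / fact (m - j) *
        (\<Sum>i\<le>n. prob_r_bell M Ys r i x / fact i * fps_nth (fps_nth (moment_egf_increment ^ k) j) (n - i)))"
proof -
  have reorder: "fps_const c * (fps_exp (real r) * P) * Q = fps_const c * ((fps_exp (real r) * Q) * P)"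
    for c and P Q :: "real fps"
    by (simp add: mult_ac)
  show ?thesis
    unfolding fps_nth_taylor_exp_mult sum_distrib_right fps_sum_nth reorder fps_mult_left_const_nth
    by (intro sum.cong refl arg_cong2[where f = "(*)"])
      (simp add: fps_mult_nth[of "fps_exp (real r) * exp_mgf_trunc x n"] atLeast0AtMost fps_nth_bell_egf)
qed

lemma prob_r_bell_add:
  "prob_r_bell M Ys r (m + n) x =
    (\<Sum>i=0..n. \<Sum>k=0..m. real (n choose i) * prob_r_bell M Ys r i x * x ^ k * (1 / fact k) *
       (\<Sum>j=k..m. real (m choose j) *
          (\<Sum>l\<in>compositions k j. multinom j k l * real r ^ (m - j) *
             expectation (\<lambda>\<omega>. partial_sum Ys k \<omega> ^ (n - i) * (\<Prod>p\<in>{1..k}. Ys p \<omega> ^ l p)))))"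
  (is "_ = ?R")
proof -
  define F where "F i k j l = real (n choose i) * prob_r_bell M Ys r i x * x ^ k * (1 / fact k) *
      (real (m choose j) * (multinom j k l * real r ^ (m - j) *
        expectation (\<lambda>\<omega>. partial_sum Ys k \<omega> ^ (n - i) * (\<Prod>p\<in>{1..k}. Ys p \<omega> ^ l p))))" for i k j l
  have weighted_power_0: "weighted_power k 0 l b = (\<lambda>\<omega>. partial_sum Ys k \<omega> ^ b * (\<Prod>p\<in>{1..k}. Ys p \<omega> ^ l p))"
    for k l b by (simp add: weighted_power_def fun_eq_iff)
  have "prob_r_bell M Ys r (m + n) x = (\<Sum>k\<le>m. \<Sum>j\<le>m. \<Sum>i\<le>n. \<Sum>l\<in>compositions k j. F i k j l)"
    unfolding prob_r_bell_add_eq_increment_sum fps_nth_increment_taylor_exp_mgf_trunc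
      fps_nth_nth_moment_egf_increment_power sum_distrib_left
  proof (intro sum.cong refl)
    fix k j i :: nat and l :: "nat \<Rightarrow> nat"
    assume "j \<in> {..m}" "i \<in> {..n}"
    moreover define P where "P = (\<Prod>p\<in>{1..k}. fact (l p) :: real)"
    moreover have "(\<Prod>p\<in>{1..k}. 1 / fact (l p)) = 1 / P"
      by (simp add: P_def prod_dividef)
    moreover have "P > 0"
      unfolding P_def by (rule prod_pos) simp
    ultimately show "fact m * fact n * (x ^ k / fact k * (real r ^ (m - j) / fact (m - j) *
        (prob_r_bell M Ys r i x / fact i * ((\<Prod>p\<in>{1..k}. 1 / fact (l p)) *
          expectation (weighted_power k 0 l (n - i)) / fact (n - i))))) = F i k j l"
      unfolding F_def multinom_def weighted_power_0 P_def[symmetric] by (simp add: binomial_fact field_simps)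
  qed
  also have "\<dots> = (\<Sum>i\<le>n. \<Sum>k\<le>m. \<Sum>j\<le>m. \<Sum>l\<in>compositions k j. F i k j l)"
    by (subst sum.swap) (simp add: sum.swap[of _ "{..n}"])
  also have "\<dots> = ?R"
    unfolding atLeast0AtMost
  proof (intro sum.cong refl)
    fix i k
    have "(\<Sum>j\<le>m. \<Sum>l\<in>compositions k j. F i k j l) = (\<Sum>j=k..m. \<Sum>l\<in>compositions k j. F i k j l)"
      by (rule sum.mono_neutral_right) (auto simp: compositions_empty)
    then show "(\<Sum>j\<le>m. \<Sum>l\<in>compositions k j. F i k j l) =
        real (n choose i) * prob_r_bell M Ys r i x * x ^ k * (1 / fact k) *
         (\<Sum>j=k..m. real (m choose j) *
            (\<Sum>l\<in>compositions k j. multinom j k l * real r ^ (m - j) *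
               expectation (\<lambda>\<omega>. partial_sum Ys k \<omega> ^ (n - i) * (\<Prod>p\<in>{1..k}. Ys p \<omega> ^ l p))))"
      by (simp add: F_def sum_distrib_left)
  qed
  finally show ?thesis .
qed

end

theorem theorem2p6:
  fixes M :: "'a measure" and Y :: "'a \<Rightarrow> real" and Ys :: "nat \<Rightarrow> 'a \<Rightarrow> real"
    and r0 :: real and r m n :: nat and x :: real
  assumes "prob_space M"
    and "Y \<in> borel_measurable M"
    and "r0 > 0"
    and "\<And>t. \<bar>t\<bar> < r0 \<Longrightarrow> integrable M (\<lambda>\<omega>. exp (t * Y \<omega>))"
    and "prob_space.indep_vars M (\<lambda>_. borel) Ys {1..}"
    and "\<And>j. j \<ge> 1 \<Longrightarrow> distr M borel (Ys j) = distr M borel Y"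
    and "r > 0"
  shows "prob_r_bell M Ys r (m + n) x =
    (\<Sum>i=0..n. \<Sum>k=0..m. real (n choose i) * prob_r_bell M Ys r i x * x ^ k * (1 / fact k) *
       (\<Sum>j=k..m. real (m choose j) *
          (\<Sum>l\<in>compositions k j. multinom j k l * real r ^ (m - j) *
             integral\<^sup>L M (\<lambda>\<omega>. partial_sum Ys k \<omega> ^ (n - i) * (\<Prod>p\<in>{1..k}. Ys p \<omega> ^ l p)))))"
proof -
  have exp_integrable: "integrable M (\<lambda>\<omega>. exp (t * Y \<omega>))" if "\<bar>t\<bar> = r0 / 2" for t
    using that assms(3) by (intro assms(4)) simp
  have moments: "integrable M (\<lambda>\<omega>. Y \<omega> ^ N)" for N
    using assms(3) exp_integrable[of "r0 / 2"] exp_integrable[of "- (r0 / 2)"]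
    by (intro integrable_power_if_integrable_exp[OF assms(2), where t = "r0 / 2"]) simp_all
  interpret iid_copies M Y Ys
    by (intro iid_copies.intro iid_copies_axioms.intro) (fact assms moments)+
  show ?thesis
    by (rule prob_r_bell_add)
qed

end
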